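(* Consider the discrete-time linear control system on $\mathrm{Aff}(2,\mathbb{R})$ given by $(x_{k+1},y_{k+1})=f_{u_k}(x_k,y_k)$, $u_k\in U$, where $f_u(x,y)=(h(u)x,\ a(x-1)+dy+g(u)x)$ with $a\in\mathbb{R}$, $d\in\mathbb{R}\setminus\{0\}$, and $h:\mathbb{R}^m\to(0,\infty)$, $g:\mathbb{R}^m\to\mathbb{R}$ smooth with $h(0)=1$, $g(0)=0$, and $U\subset\mathbb{R}^m$ a compact convex neighborhood of $0$. If $h'(0)\neq0$, $-a\,h'(0)\neq g'(0)(d-1)$ and $d=1$, then the system is controllable.
   Context: $\mathrm{Aff}(2,\mathbb{R})$ is the set $(0,\infty)\times\mathbb{R}$ with product $(x_1,y_1)\cdot(x_2,y_2)=(x_1x_2,\ y_2+x_2y_1)$ and identity $(1,0)$. Controls are sequences $u=(u_i)_{i\in\mathbb{N}_0}\in U^{\mathbb{N}_0}$ and the solution is $\varphi(0,p,u)=p$, $\varphi(k,p,u)=f_{u_{k-1}}\circ\cdots\circ f_{u_0}(p)$. $h'(0)$ and $g'(0)$ denote the derivatives of $h$ and $g$ at $0$. The system is controllable if for all $p,q$ there are $k\in\mathbb{N}$ and a control $u$ with $\varphi(k,p,u)=q$. *)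

theory Defs
  imports "HOL-Analysis.Analysis"
begin

fun C_k_on :: "nat \<Rightarrow> ('a::euclidean_space \<Rightarrow> real) \<Rightarrow> 'a set \<Rightarrow> bool" where
  "C_k_on 0 f S = continuous_on S f"
| "C_k_on (Suc n) f S =
     (\<exists>f'. (\<forall>x\<in>S. (f has_derivative f' x) (at x)) \<and> (\<forall>v. C_k_on n (\<lambda>x. f' x v) S))"

definition smooth_on :: "('a::euclidean_space \<Rightarrow> real) \<Rightarrow> 'a set \<Rightarrow> bool" where
  "smooth_on f S \<longleftrightarrow> (\<forall>n. C_k_on n f S)"

text \<open>Aff(2,R) realised as pairs (x,y) with x > 0.\<close>
definition Aff2 :: "(real \<times> real) set" where
  "Aff2 = {p. fst p > 0}"

definition sys_map ::
  "('u \<Rightarrow> real) \<Rightarrow> ('u \<Rightarrow> real) \<Rightarrow> real \<Rightarrow> real \<Rightarrow> 'u \<Rightarrow> real \<times> real \<Rightarrow> real \<times> real" where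
  "sys_map h g a d u p = (h u * fst p, a * (fst p - 1) + d * snd p + g u * fst p)"

fun sys_phi ::
  "('u \<Rightarrow> real) \<Rightarrow> ('u \<Rightarrow> real) \<Rightarrow> real \<Rightarrow> real \<Rightarrow> nat \<Rightarrow> real \<times> real \<Rightarrow> (nat \<Rightarrow> 'u) \<Rightarrow> real \<times> real" where
  "sys_phi h g a d 0 p u = p"
| "sys_phi h g a d (Suc k) p u = sys_map h g a d (u k) (sys_phi h g a d k p u)"

definition sys_controllable ::
  "('u \<Rightarrow> real) \<Rightarrow> ('u \<Rightarrow> real) \<Rightarrow> real \<Rightarrow> real \<Rightarrow> 'u set \<Rightarrow> bool" where
  "sys_controllable h g a d U \<longleftrightarrow>
     (\<forall>p\<in>Aff2. \<forall>q\<in>Aff2. \<exists>k::nat. k \<ge> 1 \<and>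
        (\<exists>u::nat \<Rightarrow> 'u. (\<forall>i. u i \<in> U) \<and> sys_phi h g a d k p u = q))"

end

theory Submission
  imports Defs
begin

text \<open>
  For d = 1 the zero control keeps x and shifts y by a (x - 1), while a constant control w
  multiplies x by h w and acts on y equivariantly under translations in y. Since h'(0) \<noteq> 0,
  h has a continuous right inverse R near 1 with values in U, so for large n the controls
  R (root n (X / x0)) and R (root n (x1 / X)), each applied n times, steer x from x0 to X
  and from X to x1, continuously in X. Inserting m zero controls in between adds m a (X - 1)
  to the final y; as a \<noteq> 0 (from - a h'(0) \<noteq> 0), for large m this term dominates and the
  intermediate value theorem in X \<in> [1/2, 2] hits every target y1.
\<close>

lemma sys_phi_add:
  "sys_phi h g a d (k1 + k2) p u = sys_phi h g a d k2 (sys_phi h g a d k1 p u) (\<lambda>i. u (i + k1))"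
  by (induction k2) (simp_all add: add.commute)

lemma sys_phi_cong:
  "(\<And>i. i < k \<Longrightarrow> u i = u' i) \<Longrightarrow> sys_phi h g a d k p u = sys_phi h g a d k p u'"
  by (induction k) auto

lemma fst_sys_phi_const:
  "fst (sys_phi h g a d k p (\<lambda>_. w)) = fst p * h w ^ k"
  by (induction k) (simp_all add: sys_map_def algebra_simps)

lemma continuous_on_sys_phi:
  fixes h g :: "'u::topological_space \<Rightarrow> real" and S :: "'s::topological_space set"
  assumes "continuous_on UNIV h" "continuous_on UNIV g"
    and "continuous_on S P" "\<And>i. continuous_on S (\<lambda>s. u s i)"
  shows "continuous_on S (\<lambda>s. sys_phi h g a d k (P s) (u s))"
proof (induction k)
  case 0
  then show ?case using assms(3) by simp
next
  case (Suc k)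
  have "continuous_on S (\<lambda>s. h (u s k))" "continuous_on S (\<lambda>s. g (u s k))"
    by (auto intro: continuous_on_compose2[OF assms(1)] continuous_on_compose2[OF assms(2)] assms(4))
  with Suc show ?case
    unfolding sys_phi.simps sys_map_def by (intro continuous_intros)
qed

lemma sys_phi_translate_snd:
  "sys_phi h g a 1 k (p + (0, c)) u = sys_phi h g a 1 k p u + (0, c)"
  by (induction k) (simp_all add: sys_map_def algebra_simps)

lemma sys_phi_zero_control:
  assumes "h 0 = 1" "g 0 = 0"
  shows "sys_phi h g a 1 m p (\<lambda>_. 0) = p + (0, real m * a * (fst p - 1))"
  using assms by (induction m) (simp_all add: sys_map_def algebra_simps prod_eq_iff)

lemma sys_phi_three_phases:
  fixes h g :: "'u::zero \<Rightarrow> real" and a :: real and n m :: nat and p :: "real \<times> real"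
    and w1 w3 :: 'u
  assumes "h 0 = 1" "g 0 = 0"
  defines "P \<equiv> sys_phi h g a 1 n p (\<lambda>_. w1)"
  shows "sys_phi h g a 1 (n + m + n) p (\<lambda>i. if i < n then w1 else if i < n + m then 0 else w3)
    = sys_phi h g a 1 n P (\<lambda>_. w3) + (0, real m * a * (fst P - 1))"
    (is "sys_phi h g a 1 _ p ?u = _")
proof -
  have "sys_phi h g a 1 n p ?u = P"
    unfolding P_def by (rule sys_phi_cong) simp
  moreover have "sys_phi h g a 1 m Z (\<lambda>i. ?u (i + n)) = sys_phi h g a 1 m Z (\<lambda>_. 0)" for Z
    by (rule sys_phi_cong) simp
  moreover have "sys_phi h g a 1 n Z (\<lambda>i. ?u (i + (n + m))) = sys_phi h g a 1 n Z (\<lambda>_. w3)" for Z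
    by (rule sys_phi_cong) simp
  ultimately show ?thesis
    by (simp add: sys_phi_add[of h g a 1 "n + m" n] sys_phi_add[of h g a 1 n m]
        sys_phi_zero_control[of h g] assms(1,2) sys_phi_translate_snd)
qed

lemma eventually_root_in_interval:
  fixes lo hi a b :: real
  assumes "lo < 1" "1 < hi" "0 < a"
  shows "\<forall>\<^sub>F n in sequentially. \<forall>\<rho>\<in>{a..b}. root n \<rho> \<in> {lo..hi}"
proof (cases "a \<le> b")
  case True
  have "\<forall>\<^sub>F n in sequentially. lo < root n a"
    using order_tendstoD(1)[OF LIMSEQ_root_const[OF assms(3)] assms(1)] .
  moreover have "\<forall>\<^sub>F n in sequentially. root n b < hi"
    using order_tendstoD(2)[OF LIMSEQ_root_const assms(2)] assms(3) True by simp
  moreover have "\<forall>\<^sub>F n in sequentially. 0 < n"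
    by (rule eventually_gt_at_top)
  ultimately show ?thesis
  proof eventually_elim
    case (elim n)
    show ?case
    proof
      fix \<rho> assume "\<rho> \<in> {a..b}"
      then have "root n a \<le> root n \<rho>" "root n \<rho> \<le> root n b"
        using \<open>0 < n\<close> by simp_all
      with elim show "root n \<rho> \<in> {lo..hi}"
        by (simp del: real_root_le_iff)
    qed
  qed
qed simp

lemma IVT_dominant_linear_term:
  fixes f :: "real \<Rightarrow> real"
  assumes f: "continuous_on {lo..hi} f" and "lo < c" "c < hi" "a \<noteq> 0"
  shows "\<exists>m::nat. \<exists>x\<in>{lo..hi}. f x + real m * a * (x - c) = y"
proof -
  obtain B where B: "\<And>x. x \<in> {lo..hi} \<Longrightarrow> \<bar>f x\<bar> \<le> B"
    using compact_imp_bounded[OF compact_continuous_image[OF f compact_Icc]]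
    unfolding bounded_iff by fastforce
  define \<delta> where "\<delta> = min (c - lo) (hi - c) * \<bar>a\<bar>"
  have "\<delta> > 0"
    unfolding \<delta>_def using assms by simp
  then obtain m :: nat where "(B + \<bar>y\<bar>) / \<delta> < m"
    using reals_Archimedean2 by blast
  with \<open>\<delta> > 0\<close> have m: "B + \<bar>y\<bar> < real m * \<delta>"
    by (simp add: field_simps)
  have "real m * \<delta> \<le> real m * \<bar>a\<bar> * (c - lo)" "real m * \<delta> \<le> real m * \<bar>a\<bar> * (hi - c)"
    unfolding \<delta>_def by (simp_all add: mult_left_mono mult.commute mult.left_commute)
  with m B[of lo] B[of hi] assms(2,3)
  have lo: "\<bar>f lo - y\<bar> < real m * \<bar>a\<bar> * (c - lo)" and hi: "\<bar>f hi - y\<bar> < real m * \<bar>a\<bar> * (hi - c)"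
    by auto
  define F where "F x = f x + real m * a * (x - c)" for x
  have F: "continuous_on {lo..hi} F"
    unfolding F_def by (intro continuous_intros f)
  have "\<exists>x. lo \<le> x \<and> x \<le> hi \<and> F x = y"
  proof (cases "a > 0")
    case True
    then have "F lo \<le> y" "y \<le> F hi"
      using lo hi unfolding F_def by (auto simp: algebra_simps)
    then show ?thesis
      using IVT'[OF _ _ _ F] assms(2,3) by simp
  next
    case False
    then have "F hi \<le> y" "y \<le> F lo"
      using lo hi assms(4) unfolding F_def by (auto simp: algebra_simps)
    then show ?thesis
      using IVT2'[OF _ _ _ F] assms(2,3) by simp
  qed
  then show ?thesis
    unfolding F_def by (intro exI[of _ m]) auto
qed

lemma continuous_right_inverse_on_interval:
  fixes q :: "real \<Rightarrow> real"
  assumes q: "continuous_on {s..t} q" "inj_on q {s..t}" and "s \<le> t" "q s \<le> q t"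
  shows "\<exists>R. continuous_on {q s..q t} R \<and> (\<forall>c\<in>{q s..q t}. R c \<in> {s..t} \<and> q (R c) = c)"
proof -
  have sub: "{q s..q t} \<subseteq> q ` {s..t}"
    using IVT'[OF _ _ \<open>s \<le> t\<close> q(1)] by force
  show ?thesis
  proof (intro exI conjI ballI)
    show "continuous_on {q s..q t} (the_inv_into {s..t} q)"
      using continuous_on_inv_into[OF q(1) compact_Icc q(2)] sub by (rule continuous_on_subset)
  next
    fix c assume "c \<in> {q s..q t}"
    with sub have "c \<in> q ` {s..t}"
      by blast
    then show "the_inv_into {s..t} q c \<in> {s..t}" "q (the_inv_into {s..t} q c) = c"
      using the_inv_into_into[OF q(2) _ subset_refl] f_the_inv_into_f[OF q(2)] by simp_all
  qed
qed

lemma continuous_right_inverse_of_increasing: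
  fixes q q' :: "real \<Rightarrow> real"
  assumes "0 < \<epsilon>" and q_deriv: "\<And>t. t \<in> {-\<epsilon>..\<epsilon>} \<Longrightarrow> (q has_real_derivative q' t) (at t)"
    and pos: "\<And>t. t \<in> {-\<epsilon>..\<epsilon>} \<Longrightarrow> 0 < q' t"
  shows "\<exists>lo hi R. lo < q 0 \<and> q 0 < hi \<and> continuous_on {lo..hi} R \<and>
    (\<forall>c\<in>{lo..hi}. R c \<in> {-\<epsilon>..\<epsilon>} \<and> q (R c) = c)"
proof -
  have q_cont: "continuous_on {-\<epsilon>..\<epsilon>} q"
    using q_deriv by (intro DERIV_atLeastAtMost_imp_continuous_on) (meson atLeastAtMost_iff)
  have q_mono: "strict_mono_on {-\<epsilon>..\<epsilon>} q"
  proof (rule strict_mono_onI)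
    fix s t assume st: "s \<in> {-\<epsilon>..\<epsilon>}" "t \<in> {-\<epsilon>..\<epsilon>}" "s < t"
    show "q s < q t"
    proof (rule DERIV_pos_imp_increasing[OF \<open>s < t\<close>])
      fix x assume "s \<le> x" "x \<le> t"
      with st have "x \<in> {-\<epsilon>..\<epsilon>}"
        by simp
      then show "\<exists>y. (q has_real_derivative y) (at x) \<and> 0 < y"
        using q_deriv pos by blast
    qed
  qed
  have "q (-\<epsilon>) < q 0" "q 0 < q \<epsilon>"
    using \<open>0 < \<epsilon>\<close> strict_mono_onD[OF q_mono, of "-\<epsilon>" 0] strict_mono_onD[OF q_mono, of 0 \<epsilon>]
    by simp_all
  with continuous_right_inverse_on_interval[OF q_cont strict_mono_on_imp_inj_on[OF q_mono]] \<open>0 < \<epsilon>\<close>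
  show ?thesis
    by fastforce
qed

lemma local_continuous_right_inverse:
  fixes h :: "'a::euclidean_space \<Rightarrow> real"
  assumes deriv: "\<And>x. (h has_derivative h' x) (at x)"
    and cont: "\<And>v. continuous_on UNIV (\<lambda>x. h' x v)"
    and "h' z \<noteq> (\<lambda>v. 0)" and "z \<in> interior U"
  shows "\<exists>lo hi R. lo < h z \<and> h z < hi \<and> continuous_on {lo..hi} R \<and>
    (\<forall>c\<in>{lo..hi}. R c \<in> U \<and> h (R c) = c)"
proof -
  have lin: "linear (h' x)" for x
    using deriv has_derivative_linear by blast
  obtain w where "h' z w \<noteq> 0"
    using \<open>h' z \<noteq> (\<lambda>v. 0)\<close> by blast
  then obtain v where v: "h' z v > 0"
    using linear_neg[OF lin, of z w] by (metis neg_0_less_iff_less linorder_neqE_linordered_idom)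
  define line where "line t = z + t *\<^sub>R v" for t :: real
  have line_cont: "continuous_on UNIV line"
    unfolding line_def by (intro continuous_intros)
  define S where "S = {t. 0 < h' (line t) v} \<inter> line -` interior U"
  have "open S"
    unfolding S_def using line_cont
    by (intro open_Int open_Collect_less continuous_open_vimage continuous_on_compose2[OF cont])
      (auto simp: continuous_on_eq_continuous_at)
  moreover have "0 \<in> S"
    using v \<open>z \<in> interior U\<close> unfolding S_def line_def by simp
  ultimately obtain \<epsilon> where "\<epsilon> > 0" and \<epsilon>: "cball 0 \<epsilon> \<subseteq> S"
    using open_contains_cball by blast
  have pos: "0 < h' (line t) v" and inU: "line t \<in> U" if "t \<in> {-\<epsilon>..\<epsilon>}" for t
  proof -
    have "t \<in> cball 0 \<epsilon>"
      using that by (simp add: abs_le_iff)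
    with \<epsilon> have "t \<in> S"
      by blast
    then show "0 < h' (line t) v" "line t \<in> U"
      using interior_subset unfolding S_def by blast+
  qed
  have line_deriv: "((\<lambda>t. h (line t)) has_real_derivative h' (line t) v) (at t)" for t
  proof -
    have "((\<lambda>t. h (line t)) has_derivative (\<lambda>s. h' (line t) (s *\<^sub>R v))) (at t)"
      unfolding line_def by (rule has_derivative_compose[OF _ deriv]) (auto intro!: derivative_eq_intros)
    moreover have "(\<lambda>s. h' (line t) (s *\<^sub>R v)) = (*) (h' (line t) v)"
      by (auto simp: linear_scale[OF lin])
    ultimately show ?thesis
      unfolding has_field_derivative_def by simp
  qed
  obtain lo hi R where "lo < h z" "h z < hi" "continuous_on {lo..hi} R"
    and R: "\<And>c. c \<in> {lo..hi} \<Longrightarrow> R c \<in> {-\<epsilon>..\<epsilon>} \<and> h (line (R c)) = c"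
    using continuous_right_inverse_of_increasing[OF \<open>\<epsilon> > 0\<close> line_deriv pos] line_def by auto
  moreover have "continuous_on {lo..hi} (line \<circ> R)"
    using \<open>continuous_on {lo..hi} R\<close> line_cont by (intro continuous_on_compose) (auto intro: continuous_on_subset)
  moreover have "(line \<circ> R) c \<in> U \<and> h ((line \<circ> R) c) = c" if "c \<in> {lo..hi}" for c
    using R[OF that] inU by simp
  ultimately show ?thesis
    by blast
qed

lemma eventually_continuous_root_controls:
  fixes \<rho> :: "real \<Rightarrow> real" and R :: "real \<Rightarrow> 'u::topological_space"
  assumes "lo < 1" "1 < hi" and R_cont: "continuous_on {lo..hi} R"
    and R: "\<And>c. c \<in> {lo..hi} \<Longrightarrow> R c \<in> U \<and> h (R c) = c"
    and \<rho>_cont: "continuous_on K \<rho>" and \<rho>: "\<And>X. X \<in> K \<Longrightarrow> \<rho> X \<in> {a..b}" and "0 < a"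
  shows "\<forall>\<^sub>F n in sequentially. \<exists>w. continuous_on K w \<and> (\<forall>X\<in>K. w X \<in> U \<and> h (w X) ^ n = \<rho> X)"
  using eventually_gt_at_top[of 0] eventually_root_in_interval[OF assms(1,2) \<open>0 < a\<close>, of b]
proof eventually_elim
  case (elim n)
  then have root_in: "root n (\<rho> X) \<in> {lo..hi}" if "X \<in> K" for X
    using \<rho>[OF that] by blast
  have "continuous_on K (\<lambda>X. R (root n (\<rho> X)))"
    using root_in by (intro continuous_on_compose2[OF R_cont] continuous_intros \<rho>_cont) auto
  moreover have "R (root n (\<rho> X)) \<in> U \<and> h (R (root n (\<rho> X))) ^ n = \<rho> X" if "X \<in> K" for X
    using R[OF root_in[OF that]] real_root_pow_pos[OF \<open>0 < n\<close>] \<rho>[OF that] \<open>0 < a\<close> by auto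
  ultimately show ?case
    by blast
qed

lemma sys_controllable_if_right_inverse:
  fixes h g :: "'u::{zero,topological_space} \<Rightarrow> real"
  assumes h_cont: "continuous_on UNIV h" and g_cont: "continuous_on UNIV g"
    and "h 0 = 1" "g 0 = 0" "a \<noteq> 0" "0 \<in> U"
    and "lo < 1" "1 < hi" and R_cont: "continuous_on {lo..hi} R"
    and R: "\<And>c. c \<in> {lo..hi} \<Longrightarrow> R c \<in> U \<and> h (R c) = c"
  shows "sys_controllable h g a 1 U"
  unfolding sys_controllable_def
proof (intro ballI)
  fix p q assume "p \<in> Aff2" "q \<in> Aff2"
  then obtain x0 y0 x1 y1 where p: "p = (x0, y0)" and q: "q = (x1, y1)" and "x0 > 0" "x1 > 0"
    unfolding Aff2_def by (cases p, cases q) auto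
  have "X / x0 \<in> {1 / (2 * x0)..2 / x0}" "x1 / X \<in> {x1 / 2..2 * x1}" if "X \<in> {1/2..2}" for X
    using that \<open>x0 > 0\<close> \<open>x1 > 0\<close> by (auto simp: field_simps)
  then have "\<forall>\<^sub>F n in sequentially. 0 < n
      \<and> (\<exists>w. continuous_on {1/2..2} w \<and> (\<forall>X\<in>{1/2..2}. w X \<in> U \<and> h (w X) ^ n = X / x0))
      \<and> (\<exists>w. continuous_on {1/2..2} w \<and> (\<forall>X\<in>{1/2..2}. w X \<in> U \<and> h (w X) ^ n = x1 / X))"
    using \<open>x0 > 0\<close> \<open>x1 > 0\<close>
    by (intro eventually_conj eventually_gt_at_top
        eventually_continuous_root_controls[OF \<open>lo < 1\<close> \<open>1 < hi\<close> R_cont R, where a = "1 / (2 * x0)"]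
        eventually_continuous_root_controls[OF \<open>lo < 1\<close> \<open>1 < hi\<close> R_cont R, where a = "x1 / 2"])
      (auto intro!: continuous_intros)
  then obtain n w1 w3 where "n > 0"
    and "continuous_on {1/2..2} w1" and w1: "\<And>X. X \<in> {1/2..2} \<Longrightarrow> w1 X \<in> U \<and> h (w1 X) ^ n = X / x0"
    and "continuous_on {1/2..2} w3" and w3: "\<And>X. X \<in> {1/2..2} \<Longrightarrow> w3 X \<in> U \<and> h (w3 X) ^ n = x1 / X"
    unfolding eventually_sequentially by blast
  define P where "P X = sys_phi h g a 1 n p (\<lambda>_. w1 X)" for X
  define F where "F X = sys_phi h g a 1 n (P X) (\<lambda>_. w3 X)" for X
  have fst_P: "fst (P X) = X" and fst_F: "fst (F X) = x1" if "X \<in> {1/2..2}" for X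
    using w1[OF that] w3[OF that] that \<open>x0 > 0\<close> unfolding F_def P_def p fst_sys_phi_const by auto
  have "continuous_on {1/2..2} (\<lambda>X. snd (F X))"
    unfolding F_def P_def
    by (intro continuous_intros continuous_on_sys_phi[OF h_cont g_cont] \<open>continuous_on {1/2..2} w1\<close>
        \<open>continuous_on {1/2..2} w3\<close>)
  then obtain m X where X: "X \<in> {1/2..2}" and m: "snd (F X) + real m * a * (X - 1) = y1"
    using IVT_dominant_linear_term[of "1/2" 2 "\<lambda>X. snd (F X)" 1 a y1] \<open>a \<noteq> 0\<close>
    by (auto simp del: atLeastAtMost_iff)
  define u where "u i = (if i < n then w1 X else if i < n + m then 0 else w3 X)" for i
  have "sys_phi h g a 1 (n + m + n) p u = F X + (0, real m * a * (fst (P X) - 1))"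
    unfolding u_def F_def P_def by (rule sys_phi_three_phases) fact+
  also have "\<dots> = q"
    using fst_P[OF X] fst_F[OF X] m q by (simp add: prod_eq_iff)
  finally have "sys_phi h g a 1 (n + m + n) p u = q" .
  moreover have "\<forall>i. u i \<in> U"
    using w1[OF X] w3[OF X] \<open>0 \<in> U\<close> unfolding u_def by simp
  ultimately show "\<exists>k\<ge>1. \<exists>u. (\<forall>i. u i \<in> U) \<and> sys_phi h g a 1 k p u = q"
    using \<open>n > 0\<close> by (intro exI[of _ "n + m + n"]) auto
qed

theorem theorem3p9:
  fixes h g :: "real^'m \<Rightarrow> real" and Dh Dg :: "real^'m \<Rightarrow> real"
    and a d :: real and U :: "(real^'m) set"
  assumes "d \<noteq> 0"
    and "\<forall>v. h v > 0"
    and "smooth_on h UNIV" and "smooth_on g UNIV"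
    and "h 0 = 1" and "g 0 = 0"
    and "compact U" and "convex U" and "0 \<in> interior U"
    and "(h has_derivative Dh) (at 0)" and "(g has_derivative Dg) (at 0)"
    and "Dh \<noteq> (\<lambda>v. 0)"
    and "(\<lambda>v. - a * Dh v) \<noteq> (\<lambda>v. Dg v * (d - 1))"
    and "d = 1"
  shows "sys_controllable h g a d U"
proof -
  have "a \<noteq> 0"
    using assms(13,14) by auto
  have "C_k_on 0 h UNIV" "C_k_on 0 g UNIV" "C_k_on 1 h UNIV"
    using assms(3,4) unfolding smooth_on_def by blast+
  then obtain h' where h_cont: "continuous_on UNIV h" and g_cont: "continuous_on UNIV g"
    and h': "\<And>x. (h has_derivative h' x) (at x)" "\<And>v. continuous_on UNIV (\<lambda>x. h' x v)"
    by auto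
  have "h' 0 \<noteq> (\<lambda>v. 0)"
    using has_derivative_unique[OF h'(1) assms(10)] assms(12) by simp
  then obtain lo hi R where "lo < 1" "1 < hi" "continuous_on {lo..hi} R"
    "\<forall>c\<in>{lo..hi}. R c \<in> U \<and> h (R c) = c"
    using local_continuous_right_inverse[OF h' _ assms(9)] assms(5) by metis
  then show ?thesis
    using sys_controllable_if_right_inverse[OF h_cont g_cont assms(5,6) \<open>a \<noteq> 0\<close>]
      interior_subset assms(9,14) by blast
qed

end
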